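(* Let $S$ be an atomic base, $\Gamma=x_1:A_1,\dots,x_n:A_n$ a context and $t$ a proof-term with $tFV(t)\subseteq\{x_1,\dots,x_n\}$. Then the term $t$ of $A$ from $\Gamma$ is valid in the E-phase model if and only if it is E-valid, i.e. if and only if $t[x_1:=t_1,\dots,x_n:=t_n]\in A^*$ for all closed terms $t_i\in A_i^*$ ($1\le i\le n$) exactly when $t$ is qE-valid.
   Context: System $\mathbf{IL}_{\mathbf{at}}$: formulas $A ::= X\mid A\to B\mid\forall X.A$ ($X$ atoms); terms $t ::= x\mid c^A\mid \lambda x.t\mid ts\mid\Lambda X.t\mid tX$ (with a term-constant $c^A$ for every formula $A$; $tX$ only for atoms $X$); typing judgments $\Gamma\vdash t:A$ derived by the rules: $\Gamma,x:A\vdash x:A$; $\Gamma\vdash c^A:A$; $\lambda$-abstraction ($\to$i); application ($\to$e); $\Lambda X.t:\forall X.A$ from $t:A$ when $X$ is not free in the formulas of $\Gamma$ ($\forall$i); $tY:A[X:=Y]$ from $t:\forall X.A$ for an atom $Y$ ($\forall$e). $tFV(t)$: free term-variables; closed = no free term-variables. $\beta$-reduction $(\lambda x.t)s\to_\beta t[x:=s]$, $(\Lambda X.t)Y\to_\beta t[X:=Y]$ in any subterm position; normal = no redex; $\twoheadrightarrow$ its reflexive-transitive closure. For a formula $A$, $[\![A]\!]$ is the set of closed terms $t$ such that $t\twoheadrightarrow s$ for some normal $s$ with $\vdash s:A$ derivable (empty context). E-phase model: an interpretation $A\mapsto A^*$ of formulas as sets of closed terms, defined by induction: $X^*=[\![X]\!]$;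 $(A\to B)^*=\{t \text{ closed}\mid ts\in B^* \text{ for every } s\in A^*\}$; $(\forall X.A)^*=\{t\text{ closed}\mid tY\in (A[X:=Y])^*\text{ for every atom } Y\}$. A term $t$ of $A$ from $x_1:A_1,\dots,x_n:A_n$ with $tFV(t)\subseteq\{x_1,\dots,x_n\}$ is valid in the E-phase model iff $t[x_1:=t_1,\dots,x_n:=t_n]\in A^*$ for all $t_i\in A_i^*$. An atomic base $S$ is a set of term-constants $c^X$ for atoms $X$; a proof-term contains no term-constants other than those in $S$. qE-validity: a closed $t$ of atom $X$ is qE-valid iff $t\in[\![X]\!]$; a closed $t$ of $B\to C$ is qE-valid iff $ts$ of $C$ is qE-valid for every qE-valid closed $s$ of $B$; a closed $t$ of $\forall X.A$ is qE-valid iff $tY$ of $A[X:=Y]$ is qE-valid for every atom $Y$; $t$ of $A$ from $x_1:A_1,\dots,x_n:A_n$ is qE-valid iff $t[\vec{t_i}]$ is qE-valid for all qE-valid closed $t_i$ of $A_i$. E-valid = proof-term and qE-valid. *)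

theory Defs
  imports Main
begin

text \<open>Atoms are natural numbers. Formulas use de Bruijn indices for atoms:
  \<open>All A\<close> binds atom index 0 in \<open>A\<close>; free atoms are indices beyond the binders.\<close>

datatype form = Atom nat | Imp form form | All form

fun fshift :: "nat \<Rightarrow> form \<Rightarrow> form" where
  "fshift c (Atom i) = Atom (if i < c then i else Suc i)"
| "fshift c (Imp A B) = Imp (fshift c A) (fshift c B)"
| "fshift c (All A) = All (fshift (Suc c) A)"

text \<open>\<open>finst k Y A\<close>: replace atom index \<open>k\<close> by the (outer) free atom \<open>Y\<close>;
  so \<open>finst 0 Y A\<close> is \<open>A[X:=Y]\<close> for the body \<open>A\<close> of \<open>\<forall>X.A\<close>.\<close>
fun finst :: "nat \<Rightarrow> nat \<Rightarrow> form \<Rightarrow> form" where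
  "finst k Y (Atom i) = Atom (if i < k then i else if i = k then Y + k else i - 1)"
| "finst k Y (Imp A B) = Imp (finst k Y A) (finst k Y B)"
| "finst k Y (All A) = All (finst (Suc k) Y A)"

lemma size_finst[simp]: "size (finst k Y A) = size A"
  by (induction A arbitrary: k) auto

text \<open>Terms: de Bruijn indices for term variables (\<open>Lam\<close> binds index 0) and
  for atoms (\<open>TLam\<close> binds atom index 0 inside constants' formulas and atom arguments).\<close>

datatype trm = Var nat | Const form | Lam trm | App trm trm | TLam trm | TApp trm nat

fun tshift :: "nat \<Rightarrow> trm \<Rightarrow> trm" where
  "tshift c (Var i) = Var i"
| "tshift c (Const A) = Const (fshift c A)"
| "tshift c (Lam t) = Lam (tshift c t)"
| "tshift c (App t s) = App (tshift c t) (tshift c s)"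
| "tshift c (TLam t) = TLam (tshift (Suc c) t)"
| "tshift c (TApp t Y) = TApp (tshift c t) (if Y < c then Y else Suc Y)"

fun tinst :: "nat \<Rightarrow> nat \<Rightarrow> trm \<Rightarrow> trm" where
  "tinst k Y (Var i) = Var i"
| "tinst k Y (Const A) = Const (finst k Y A)"
| "tinst k Y (Lam t) = Lam (tinst k Y t)"
| "tinst k Y (App t s) = App (tinst k Y t) (tinst k Y s)"
| "tinst k Y (TLam t) = TLam (tinst (Suc k) Y t)"
| "tinst k Y (TApp t Z) = TApp (tinst k Y t) (if Z < k then Z else if Z = k then Y + k else Z - 1)"

fun lift :: "nat \<Rightarrow> trm \<Rightarrow> trm" where
  "lift c (Var i) = Var (if i < c then i else Suc i)"
| "lift c (Const A) = Const A"
| "lift c (Lam t) = Lam (lift (Suc c) t)"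
| "lift c (App t s) = App (lift c t) (lift c s)"
| "lift c (TLam t) = TLam (lift c t)"
| "lift c (TApp t Y) = TApp (lift c t) Y"

fun subst :: "trm \<Rightarrow> nat \<Rightarrow> trm \<Rightarrow> trm" where
  "subst (Var i) k s = (if i < k then Var i else if i = k then s else Var (i - 1))"
| "subst (Const A) k s = Const A"
| "subst (Lam t) k s = Lam (subst t (Suc k) (lift 0 s))"
| "subst (App t u) k s = App (subst t k s) (subst u k s)"
| "subst (TLam t) k s = TLam (subst t k (tshift 0 s))"
| "subst (TApp t Y) k s = TApp (subst t k s) Y"

text \<open>Simultaneous substitution \<open>t[x_1:=t_1,\<dots>,x_n:=t_n]\<close> (variable \<open>x_(i+1)\<close> is index \<open>i\<close>).\<close>
fun substs_at :: "nat \<Rightarrow> trm list \<Rightarrow> trm \<Rightarrow> trm" where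
  "substs_at k ts (Var i) =
     (if i < k then Var i else if i - k < length ts then ts ! (i - k) else Var (i - length ts))"
| "substs_at k ts (Const A) = Const A"
| "substs_at k ts (Lam t) = Lam (substs_at (Suc k) (map (lift 0) ts) t)"
| "substs_at k ts (App t u) = App (substs_at k ts t) (substs_at k ts u)"
| "substs_at k ts (TLam t) = TLam (substs_at k (map (tshift 0) ts) t)"
| "substs_at k ts (TApp t Y) = TApp (substs_at k ts t) Y"

definition substs :: "trm list \<Rightarrow> trm \<Rightarrow> trm" where
  "substs ts t = substs_at 0 ts t"

fun closed_at :: "nat \<Rightarrow> trm \<Rightarrow> bool" where
  "closed_at n (Var i) = (i < n)"
| "closed_at n (Const A) = True"
| "closed_at n (Lam t) = closed_at (Suc n) t"
| "closed_at n (App t s) = (closed_at n t \<and> closed_at n s)"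
| "closed_at n (TLam t) = closed_at n t"
| "closed_at n (TApp t Y) = closed_at n t"

definition closed :: "trm \<Rightarrow> bool" where
  "closed t = closed_at 0 t"

inductive beta :: "trm \<Rightarrow> trm \<Rightarrow> bool" where
  beta_Lam: "beta (App (Lam t) s) (subst t 0 s)"
| beta_TLam: "beta (TApp (TLam t) Y) (tinst 0 Y t)"
| cong_Lam: "beta t t' \<Longrightarrow> beta (Lam t) (Lam t')"
| cong_AppL: "beta t t' \<Longrightarrow> beta (App t s) (App t' s)"
| cong_AppR: "beta s s' \<Longrightarrow> beta (App t s) (App t s')"
| cong_TLam: "beta t t' \<Longrightarrow> beta (TLam t) (TLam t')"
| cong_TApp: "beta t t' \<Longrightarrow> beta (TApp t Y) (TApp t' Y)"

definition normal :: "trm \<Rightarrow> bool" where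
  "normal t \<longleftrightarrow> \<not> (\<exists>u. beta t u)"

text \<open>Typing; the context is a list, \<open>Var i\<close> has the \<open>i\<close>-th formula. In rule (\<forall>i)
  the side condition ``X not free in \<Gamma>'' is realised by shifting the context.\<close>
inductive typing :: "form list \<Rightarrow> trm \<Rightarrow> form \<Rightarrow> bool" where
  ty_Var: "i < length \<Gamma> \<Longrightarrow> typing \<Gamma> (Var i) (\<Gamma> ! i)"
| ty_Const: "typing \<Gamma> (Const A) A"
| ty_Lam: "typing (A # \<Gamma>) t B \<Longrightarrow> typing \<Gamma> (Lam t) (Imp A B)"
| ty_App: "typing \<Gamma> t (Imp A B) \<Longrightarrow> typing \<Gamma> s A \<Longrightarrow> typing \<Gamma> (App t s) B"
| ty_TLam: "typing (map (fshift 0) \<Gamma>) t A \<Longrightarrow> typing \<Gamma> (TLam t) (All A)"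
| ty_TApp: "typing \<Gamma> t (All A) \<Longrightarrow> typing \<Gamma> (TApp t Y) (finst 0 Y A)"

definition sem :: "form \<Rightarrow> trm set" where
  "sem A = {t. closed t \<and> (\<exists>s. beta\<^sup>*\<^sup>* t s \<and> normal s \<and> typing [] s A)}"

function star :: "form \<Rightarrow> trm set" where
  "star (Atom X) = sem (Atom X)"
| "star (Imp A B) = {t. closed t \<and> (\<forall>s \<in> star A. App t s \<in> star B)}"
| "star (All A) = {t. closed t \<and> (\<forall>Y. TApp t Y \<in> star (finst 0 Y A))}"
  by pat_completeness auto
termination by (relation "measure size") auto

definition valid_Ephase :: "form list \<Rightarrow> trm \<Rightarrow> form \<Rightarrow> bool" where
  "valid_Ephase \<Gamma> t A \<longleftrightarrow>
     (\<forall>ts. length ts = length \<Gamma> \<longrightarrow> (\<forall>i < length \<Gamma>. ts ! i \<in> star (\<Gamma> ! i))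
        \<longrightarrow> substs ts t \<in> star A)"

text \<open>A constant occurring under \<open>d\<close> atom binders
  refers to the free atom \<open>X - d\<close> when its formula is \<open>Atom X\<close> with \<open>X \<ge> d\<close>.\<close>
definition atomic_base :: "trm set \<Rightarrow> bool" where
  "atomic_base S \<longleftrightarrow> (\<forall>c \<in> S. \<exists>X. c = Const (Atom X))"

fun consts_in :: "trm set \<Rightarrow> nat \<Rightarrow> trm \<Rightarrow> bool" where
  "consts_in S d (Var i) = True"
| "consts_in S d (Const A) = (\<exists>X. A = Atom X \<and> d \<le> X \<and> Const (Atom (X - d)) \<in> S)"
| "consts_in S d (Lam t) = consts_in S d t"
| "consts_in S d (App t s) = (consts_in S d t \<and> consts_in S d s)"
| "consts_in S d (TLam t) = consts_in S (Suc d) t"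
| "consts_in S d (TApp t Y) = consts_in S d t"

definition proof_term :: "trm set \<Rightarrow> trm \<Rightarrow> bool" where
  "proof_term S t = consts_in S 0 t"

function qE :: "form \<Rightarrow> trm \<Rightarrow> bool" where
  "qE (Atom X) t = (t \<in> sem (Atom X))"
| "qE (Imp B C) t = (closed t \<and> (\<forall>s. closed s \<and> qE B s \<longrightarrow> qE C (App t s)))"
| "qE (All A) t = (closed t \<and> (\<forall>Y. qE (finst 0 Y A) (TApp t Y)))"
  by pat_completeness auto
termination by (relation "measure (\<lambda>(A, t). size A)") auto

definition qE_valid :: "form list \<Rightarrow> trm \<Rightarrow> form \<Rightarrow> bool" where
  "qE_valid \<Gamma> t A \<longleftrightarrow>
     (\<forall>ts. length ts = length \<Gamma> \<longrightarrow> (\<forall>i < length \<Gamma>. closed (ts ! i) \<and> qE (\<Gamma> ! i) (ts ! i))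
        \<longrightarrow> qE A (substs ts t))"

definition E_valid :: "trm set \<Rightarrow> form list \<Rightarrow> trm \<Rightarrow> form \<Rightarrow> bool" where
  "E_valid S \<Gamma> t A \<longleftrightarrow> proof_term S t \<and> qE_valid \<Gamma> t A"

end

theory Submission
  imports Defs
begin

text \<open>The E-phase interpretation and qE-validity are the same semantics: \<open>A\<^sup>*\<close> is exactly the
  set of qE-valid closed terms of \<open>A\<close>, by induction on \<open>A\<close> (for \<open>B \<rightarrow> C\<close> one only needs that
  qE-valid terms are closed). Hence the two notions of validity for open terms coincide, and
  E-validity adds only the hypothesis that \<open>t\<close> is a proof-term.\<close>

lemma qE_imp_closed: "qE A t \<Longrightarrow> closed t"
  by (cases A) (auto simp: sem_def)

lemma mem_star_iff_qE: "t \<in> star A \<longleftrightarrow> qE A t"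
  by (induction A t rule: qE.induct) (auto intro: qE_imp_closed)

lemma valid_Ephase_iff_qE_valid: "valid_Ephase \<Gamma> t A \<longleftrightarrow> qE_valid \<Gamma> t A"
  unfolding valid_Ephase_def qE_valid_def mem_star_iff_qE by (auto dest: qE_imp_closed)

theorem mainTheorem3:
  fixes S :: "trm set" and \<Gamma> :: "form list" and t :: trm and A :: form
  assumes "atomic_base S"
    and "proof_term S t"
    and "closed_at (length \<Gamma>) t"
  shows "valid_Ephase \<Gamma> t A \<longleftrightarrow> E_valid S \<Gamma> t A"
  using assms(2) by (simp add: E_valid_def valid_Ephase_iff_qE_valid)

end
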